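(* Consider the two-species BGK system described in the context, under the assumptions listed there. Let $(f_1,f_2)$ be a classical solution with positive initial data $f_1^0,f_2^0>0$. Then $f_1,f_2>0$.
   Context: Fix $N\ge1$, masses $m_1,m_2>0$, $\varepsilon\in(0,1]$, $\alpha\in[0,1]$, $\delta$ with $\frac{\frac{m_1}{m_2}\varepsilon-1}{1+\frac{m_1}{m_2}\varepsilon}\le\delta\le 1$, and $\gamma$ with $0\le\gamma\le\frac{m_1}{N}(1-\delta)\big[(1+\frac{m_1}{m_2}\varepsilon)\delta+1-\frac{m_1}{m_2}\varepsilon\big]$. For $f_k(x,v,t)$ define $n_k=\int f_k\,dv$, $n_ku_k=\int vf_k\,dv$, $Nn_kT_k=\int m_k|v-u_k|^2f_k\,dv$, and $u_{12}=\delta u_1+(1-\delta)u_2$, $u_{21}=u_2-\frac{m_1}{m_2}\varepsilon(1-\delta)(u_2-u_1)$, $T_{12}=\alpha T_1+(1-\alpha)T_2+\gamma|u_1-u_2|^2$, $T_{21}=\big[\frac1N\varepsilon m_1(1-\delta)(\frac{m_1}{m_2}\varepsilon(\delta-1)+\delta+1)-\varepsilon\gamma\big]|u_1-u_2|^2+\varepsilon(1-\alpha)T_1+(1-\varepsilon(1-\alpha))T_2$. Maxwellians: $M_k=\frac{n_k}{(2\pi T_k/m_k)^{N/2}}e^{-\frac{|v-u_k|^2}{2T_k/m_k}}$, $M_{12}=\frac{n_1}{(2\pi T_{12}/m_1)^{N/2}}e^{-\frac{|v-u_{12}|^2}{2T_{12}/m_1}}$, $M_{21}=\frac{n_2}{(2\pi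 T_{21}/m_2)^{N/2}}e^{-\frac{|v-u_{21}|^2}{2T_{21}/m_2}}$. The system is $\partial_tf_1+v\cdot\nabla_xf_1=\nu_{11}n_1(M_1-f_1)+\nu_{12}n_2(M_{12}-f_1)$, $\partial_tf_2+v\cdot\nabla_xf_2=\nu_{22}n_2(M_2-f_2)+\nu_{21}n_1(M_{21}-f_2)$, $f_k(t=0)=f_k^0$. Assumptions: (1) periodicity in $x$ with periods $a_1,\dots,a_N>0$ for solutions and initial data, spatial domain $\Lambda=\{x: x_i\in(0,a_i)\}$; (2) $f_k^0\ge0$, $(1+|v|^2)f_k^0\in L^1(\Lambda\times\mathbb{R}^N)$, $\int\!\!\int f_k^0\,dv\,dx=1$; (3) $\sup_{x,v}f_k^0(x,v)(1+|v|^q)=\frac12A_0<\infty$ for some $q>N+2$; (4) $\gamma_k(x,t):=\int f_k^0(x-vt,v)\,dv\ge C_0>0$ for all $t$; (5) $\nu_{jk}n_k=\tilde\nu_{jk}\frac{n_k}{n_1+n_2}$ with constants $\tilde\nu_{jk}>0$. *)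

theory Defs
  imports "HOL-Analysis.Analysis"
begin

definition dens :: "(real^'n \<Rightarrow> real) \<Rightarrow> real" where
  "dens g = (LINT v|lborel. g v)"

definition vel :: "(real^'n \<Rightarrow> real) \<Rightarrow> real^'n" where
  "vel g = (1 / dens g) *\<^sub>R (LINT v|lborel. g v *\<^sub>R v)"

definition temp :: "real \<Rightarrow> (real^'n \<Rightarrow> real) \<Rightarrow> real" where
  "temp m g = (LINT v|lborel. m * (norm (v - vel g))\<^sup>2 * g v) / (real CARD('n) * dens g)"

definition maxwellian :: "real \<Rightarrow> real \<Rightarrow> real^'n \<Rightarrow> real \<Rightarrow> real^'n \<Rightarrow> real" where
  "maxwellian m n u T v =
     n / ((2 * pi * T / m) powr (real CARD('n) / 2)) * exp (- (norm (v - u))\<^sup>2 / (2 * T / m))"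

definition u12 :: "real \<Rightarrow> 'a::real_vector \<Rightarrow> 'a \<Rightarrow> 'a" where
  "u12 \<delta> u1 u2 = \<delta> *\<^sub>R u1 + (1 - \<delta>) *\<^sub>R u2"

definition u21 :: "real \<Rightarrow> real \<Rightarrow> real \<Rightarrow> real \<Rightarrow> 'a::real_vector \<Rightarrow> 'a \<Rightarrow> 'a" where
  "u21 m1 m2 \<epsilon> \<delta> u1 u2 = u2 - (m1 / m2 * \<epsilon> * (1 - \<delta>)) *\<^sub>R (u2 - u1)"

definition T12 :: "real \<Rightarrow> real \<Rightarrow> real^'n \<Rightarrow> real^'n \<Rightarrow> real \<Rightarrow> real \<Rightarrow> real" where
  "T12 \<alpha> \<gamma> u1 u2 T1 T2 = \<alpha> * T1 + (1 - \<alpha>) * T2 + \<gamma> * (norm (u1 - u2))\<^sup>2"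

definition T21 :: "real \<Rightarrow> real \<Rightarrow> real \<Rightarrow> real \<Rightarrow> real \<Rightarrow> real \<Rightarrow> real^'n \<Rightarrow> real^'n \<Rightarrow> real \<Rightarrow> real \<Rightarrow> real" where
  "T21 m1 m2 \<epsilon> \<alpha> \<delta> \<gamma> u1 u2 T1 T2 =
     (1 / real CARD('n) * \<epsilon> * m1 * (1 - \<delta>) * (m1 / m2 * \<epsilon> * (\<delta> - 1) + \<delta> + 1) - \<epsilon> * \<gamma>)
       * (norm (u1 - u2))\<^sup>2
     + \<epsilon> * (1 - \<alpha>) * T1 + (1 - \<epsilon> * (1 - \<alpha>)) * T2"

definition periodic_x :: "('n \<Rightarrow> real) \<Rightarrow> (real^'n \<Rightarrow> 'b) \<Rightarrow> bool" where
  "periodic_x a h \<longleftrightarrow> (\<forall>i x. h (x + a i *\<^sub>R axis i 1) = h x)"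

definition cell :: "('n \<Rightarrow> real) \<Rightarrow> (real^'n) set" where
  "cell a = {x. \<forall>i. 0 < x $ i \<and> x $ i < a i}"

definition admissible_initial ::
  "('n \<Rightarrow> real) \<Rightarrow> real \<Rightarrow> (real^'n \<Rightarrow> real^'n \<Rightarrow> real) \<Rightarrow> bool" where
  "admissible_initial a C0 f0 \<longleftrightarrow>
     periodic_x a f0 \<and>
     (\<forall>x v. 0 \<le> f0 x v) \<and>
     integrable lborel (\<lambda>p. indicator (cell a \<times> UNIV) p * ((1 + (norm (snd p))\<^sup>2) * f0 (fst p) (snd p))) \<and>
     (LINT p|lborel. indicator (cell a \<times> UNIV) p * f0 (fst p) (snd p)) = 1 \<and>
     (\<exists>q A0. q > real CARD('n) + 2 \<and> (\<forall>x v. f0 x v * (1 + norm v powr q) \<le> A0 / 2)) \<and>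
     (\<forall>x t. C0 \<le> (LINT v|lborel. f0 (x - t *\<^sub>R v) v))"

end

theory Submission
  imports Defs
begin

text \<open>Along a characteristic s \<mapsto> (x - (t - s) v, s) each BGK equation reads
  g' = c (M - g) + c' (M' - g) with Maxwellians M, M' \<ge> 0 and weights 0 \<le> c \<le> \<nu>, 0 \<le> c' \<le> \<nu>',
  so g' \<ge> -(\<nu> + \<nu>') g as long as g \<ge> 0. Hence exp ((\<nu> + \<nu>') s) g s cannot decrease before g
  first becomes nonpositive, which therefore never happens. Only the nonnegativity of the
  Maxwellians enters.\<close>

lemma continuous_on_first_nonpos:
  fixes g :: "real \<Rightarrow> real"
  assumes cont: "continuous_on {0..t} g" and "0 < g 0" "0 \<le> t" "g t \<le> 0"
  obtains r where "0 < r" "r \<le> t" "g r \<le> 0" "\<And>s. 0 \<le> s \<Longrightarrow> s < r \<Longrightarrow> 0 < g s"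
proof -
  define S where "S = {0..t} \<inter> g -` {..0}"
  have "closed S"
    unfolding S_def by (rule continuous_closed_preimage[OF cont]) auto
  moreover have "t \<in> S" "bdd_below S"
    using assms by (auto simp: S_def intro: bdd_belowI[of _ 0])
  ultimately have "Inf S \<in> S"
    using closed_contains_Inf by blast
  then have r: "0 \<le> Inf S" "Inf S \<le> t" "g (Inf S) \<le> 0"
    by (auto simp: S_def)
  show thesis
  proof
    show "0 < Inf S"
      using r \<open>0 < g 0\<close> by (cases "Inf S = 0") auto
    show "\<And>s. 0 \<le> s \<Longrightarrow> s < Inf S \<Longrightarrow> 0 < g s"
      using r cInf_lower[OF _ \<open>bdd_below S\<close>] by (force simp: S_def)
  qed (use r in auto)
qed

lemma DERIV_ge_neg_linear_imp_pos:
  fixes g G :: "real \<Rightarrow> real"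
  assumes cont: "continuous_on {0..t} g"
    and deriv: "\<And>s. 0 < s \<Longrightarrow> s < t \<Longrightarrow> (g has_real_derivative G s) (at s)"
    and ge: "\<And>s. 0 < s \<Longrightarrow> s < t \<Longrightarrow> 0 \<le> g s \<Longrightarrow> - K * g s \<le> G s"
    and "0 < g 0" "0 \<le> t"
  shows "0 < g t"
proof (rule ccontr)
  assume "\<not> 0 < g t"
  then obtain r where r: "0 < r" "r \<le> t" "g r \<le> 0" and pos: "\<And>s. 0 \<le> s \<Longrightarrow> s < r \<Longrightarrow> 0 < g s"
    using continuous_on_first_nonpos[OF cont] assms by (metis not_less)
  define h where "h s = exp (K * s) * g s" for s
  have "h 0 \<le> h r"
  proof (rule DERIV_nonneg_imp_increasing_open[OF less_imp_le[OF \<open>0 < r\<close>]])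
    fix s assume s: "0 < s" "s < r"
    have "(h has_real_derivative exp (K * s) * (G s + K * g s)) (at s)"
      unfolding h_def using deriv[of s] s r
      by (auto intro!: derivative_eq_intros simp: algebra_simps)
    moreover have "0 \<le> G s + K * g s"
      using ge[of s] pos[of s] s r by force
    ultimately show "\<exists>y. (h has_real_derivative y) (at s) \<and> 0 \<le> y"
      by auto
  next
    show "continuous_on {0..r} h"
      unfolding h_def using r by (intro continuous_intros continuous_on_subset[OF cont]) auto
  qed
  moreover have "h r \<le> 0" "0 < h 0"
    unfolding h_def using r \<open>0 < g 0\<close> by (auto simp: mult_nonneg_nonpos)
  ultimately show False
    by linarith
qed

lemma has_real_derivative_along_line:
  fixes F :: "'a::real_normed_vector \<times> real \<Rightarrow> real"
  assumes "(F has_derivative D) (at (x0 + s *\<^sub>R v, s))"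
  shows "((\<lambda>s. F (x0 + s *\<^sub>R v, s)) has_real_derivative D (v, 1)) (at s)"
proof -
  have line: "((\<lambda>s. (x0 + s *\<^sub>R v, s)) has_derivative (\<lambda>h. h *\<^sub>R (v, 1))) (at s)"
    by (auto intro!: derivative_eq_intros)
  have "linear D"
    using assms by (simp add: has_derivative_def bounded_linear.linear)
  have "D (h *\<^sub>R (v, 1)) = D (v, 1) * h" for h
    using linear_scale[OF \<open>linear D\<close>, of h "(v, 1)"] by (simp only: real_scaleR_def mult.commute)
  then have "D \<circ> (\<lambda>h. h *\<^sub>R (v, 1)) = (*) (D (v, 1))"
    by (auto simp del: scaleR_Pair)
  then show ?thesis
    using diff_chain_at[OF line assms] by (simp add: has_field_derivative_def o_def)
qed

lemma transport_positive:
  fixes F :: "'a::real_normed_vector \<times> real \<Rightarrow> real"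
  assumes cont: "continuous_on (UNIV \<times> {0..}) F"
    and deriv: "\<And>x t. 0 < t \<Longrightarrow> (F has_derivative DF x t) (at (x, t))"
    and ge: "\<And>x t. 0 < t \<Longrightarrow> 0 \<le> F (x, t) \<Longrightarrow> - K * F (x, t) \<le> DF x t (v, 1)"
    and init: "\<And>x. 0 < F (x, 0)" and "0 \<le> t"
  shows "0 < F (x, t)"
proof -
  define x0 where "x0 = x - t *\<^sub>R v"
  have "0 < F (x0 + t *\<^sub>R v, t)"
  proof (rule DERIV_ge_neg_linear_imp_pos[where g = "\<lambda>s. F (x0 + s *\<^sub>R v, s)"
        and G = "\<lambda>s. DF (x0 + s *\<^sub>R v) s (v, 1)"])
    show "continuous_on {0..t} (\<lambda>s. F (x0 + s *\<^sub>R v, s))"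
      by (rule continuous_on_compose2[OF cont, where f = "\<lambda>s. (x0 + s *\<^sub>R v, s)"])
        (auto intro!: continuous_intros)
    show "((\<lambda>s. F (x0 + s *\<^sub>R v, s)) has_real_derivative DF (x0 + s *\<^sub>R v) s (v, 1)) (at s)"
      if "0 < s" for s
      using deriv[OF that] by (rule has_real_derivative_along_line)
  qed (use ge init \<open>0 \<le> t\<close> in auto)
  then show ?thesis
    by (simp add: x0_def)
qed

text \<open>No sign condition on T is needed: powr is nonnegative, and division by 0 gives 0.\<close>

lemma maxwellian_nonneg: "0 \<le> n \<Longrightarrow> 0 \<le> maxwellian m n u T v"
  unfolding maxwellian_def by simp

lemma relaxation_ge:
  fixes n n' d \<nu> \<nu>' M M' y :: real
  assumes "0 \<le> n" "n \<le> d" "0 \<le> n'" "n' \<le> d" "0 \<le> \<nu>" "0 \<le> \<nu>'" "0 \<le> M" "0 \<le> M'" "0 \<le> y"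
  shows "- (\<nu> + \<nu>') * y \<le> \<nu> * n / d * (M - y) + \<nu>' * n' / d * (M' - y)"
proof -
  have weight: "0 \<le> c * k / d \<and> c * k / d \<le> c" if "0 \<le> c" "0 \<le> k" "k \<le> d" for c k :: real
    using that mult_left_mono[OF \<open>k \<le> d\<close> \<open>0 \<le> c\<close>] by (cases "d = 0") (auto simp: divide_le_eq)
  define w w' where "w = \<nu> * n / d" and "w' = \<nu>' * n' / d"
  have "0 \<le> w" "w \<le> \<nu>" "0 \<le> w'" "w' \<le> \<nu>'"
    unfolding w_def w'_def using weight assms by auto
  then have "w * y \<le> \<nu> * y" "w' * y \<le> \<nu>' * y" "0 \<le> w * M" "0 \<le> w' * M'"
    using assms by (simp_all add: mult_right_mono)
  then have "- (\<nu> + \<nu>') * y \<le> w * (M - y) + w' * (M' - y)"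
    by (simp add: algebra_simps)
  then show ?thesis
    by (simp add: w_def w'_def)
qed

theorem mainTheorem9:
  fixes f1 f2 :: "real^'n \<Rightarrow> real^'n \<Rightarrow> real \<Rightarrow> real"
    and f10 f20 :: "real^'n \<Rightarrow> real^'n \<Rightarrow> real"
    and Df1 Df2 :: "real^'n \<Rightarrow> real^'n \<Rightarrow> real \<Rightarrow> ((real^'n) \<times> real \<Rightarrow> real)"
    and a :: "'n \<Rightarrow> real"
    and m1 m2 \<epsilon> \<alpha> \<delta> \<gamma> C0 \<nu>11 \<nu>12 \<nu>21 \<nu>22 :: real
  assumes m_pos: "m1 > 0" "m2 > 0"
    and eps: "0 < \<epsilon>" "\<epsilon> \<le> 1"
    and alpha: "0 \<le> \<alpha>" "\<alpha> \<le> 1"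
    and delta: "(m1 / m2 * \<epsilon> - 1) / (1 + m1 / m2 * \<epsilon>) \<le> \<delta>" "\<delta> \<le> 1"
    and gamma: "0 \<le> \<gamma>"
      "\<gamma> \<le> m1 / real CARD('n) * (1 - \<delta>) * ((1 + m1 / m2 * \<epsilon>) * \<delta> + 1 - m1 / m2 * \<epsilon>)"
    and periods: "\<forall>i. a i > 0"
    and C0_pos: "C0 > 0"
    and init1: "admissible_initial a C0 f10" and init2: "admissible_initial a C0 f20"
    and init_pos: "\<forall>x v. f10 x v > 0" "\<forall>x v. f20 x v > 0"
    and nu_pos: "\<nu>11 > 0" "\<nu>12 > 0" "\<nu>21 > 0" "\<nu>22 > 0"
    \<comment> \<open>periodicity of the solution\<close>
    and per_sol: "\<forall>v t. periodic_x a (\<lambda>x. f1 x v t)" "\<forall>v t. periodic_x a (\<lambda>x. f2 x v t)"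
    \<comment> \<open>classical regularity: continuous for t \<ge> 0, differentiable in (x,t) for t > 0\<close>
    and cont: "\<forall>v. continuous_on (UNIV \<times> {0..}) (\<lambda>p. f1 (fst p) v (snd p))"
              "\<forall>v. continuous_on (UNIV \<times> {0..}) (\<lambda>p. f2 (fst p) v (snd p))"
    and diff: "\<forall>x v t. t > 0 \<longrightarrow> ((\<lambda>p. f1 (fst p) v (snd p)) has_derivative Df1 x v t) (at (x, t))"
              "\<forall>x v t. t > 0 \<longrightarrow> ((\<lambda>p. f2 (fst p) v (snd p)) has_derivative Df2 x v t) (at (x, t))"
    \<comment> \<open>initial condition\<close>
    and ic: "\<forall>x v. f1 x v 0 = f10 x v" "\<forall>x v. f2 x v 0 = f20 x v"
    \<comment> \<open>macroscopic quantities are well defined (so the Maxwellians make sense)\<close>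
    and mom: "\<forall>x t. t \<ge> 0 \<longrightarrow> integrable lborel (\<lambda>v. (1 + (norm v)\<^sup>2) * f1 x v t)"
             "\<forall>x t. t \<ge> 0 \<longrightarrow> integrable lborel (\<lambda>v. (1 + (norm v)\<^sup>2) * f2 x v t)"
    and dens_pos: "\<forall>x t. t \<ge> 0 \<longrightarrow> dens (\<lambda>v. f1 x v t) > 0"
                  "\<forall>x t. t \<ge> 0 \<longrightarrow> dens (\<lambda>v. f2 x v t) > 0"
    and temp_pos: "\<forall>x t. t \<ge> 0 \<longrightarrow> temp m1 (\<lambda>v. f1 x v t) > 0"
                  "\<forall>x t. t \<ge> 0 \<longrightarrow> temp m2 (\<lambda>v. f2 x v t) > 0"
    \<comment> \<open>the BGK equations; the transport term is \<partial>_t f + v \<cdot> \<nabla>_x f = Df (v, 1)\<close>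
    and eq1: "\<forall>x v t. t > 0 \<longrightarrow>
      (let n1 = dens (\<lambda>w. f1 x w t); n2 = dens (\<lambda>w. f2 x w t);
           uu1 = vel (\<lambda>w. f1 x w t); uu2 = vel (\<lambda>w. f2 x w t);
           TT1 = temp m1 (\<lambda>w. f1 x w t); TT2 = temp m2 (\<lambda>w. f2 x w t)
       in Df1 x v t (v, 1) =
            \<nu>11 * n1 / (n1 + n2) * (maxwellian m1 n1 uu1 TT1 v - f1 x v t)
          + \<nu>12 * n2 / (n1 + n2) *
              (maxwellian m1 n1 (u12 \<delta> uu1 uu2) (T12 \<alpha> \<gamma> uu1 uu2 TT1 TT2) v - f1 x v t))"
    and eq2: "\<forall>x v t. t > 0 \<longrightarrow>
      (let n1 = dens (\<lambda>w. f1 x w t); n2 = dens (\<lambda>w. f2 x w t);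
           uu1 = vel (\<lambda>w. f1 x w t); uu2 = vel (\<lambda>w. f2 x w t);
           TT1 = temp m1 (\<lambda>w. f1 x w t); TT2 = temp m2 (\<lambda>w. f2 x w t)
       in Df2 x v t (v, 1) =
            \<nu>22 * n2 / (n1 + n2) * (maxwellian m2 n2 uu2 TT2 v - f2 x v t)
          + \<nu>21 * n1 / (n1 + n2) *
              (maxwellian m2 n2 (u21 m1 m2 \<epsilon> \<delta> uu1 uu2) (T21 m1 m2 \<epsilon> \<alpha> \<delta> \<gamma> uu1 uu2 TT1 TT2) v
               - f2 x v t))"
  shows "\<forall>x v t. t \<ge> 0 \<longrightarrow> f1 x v t > 0 \<and> f2 x v t > 0"
proof (intro allI impI conjI)
  fix x v :: "real^'n" and t :: real
  assume "0 \<le> t"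
  have dens_nonneg: "0 \<le> dens (\<lambda>w. f1 y w s)" "0 \<le> dens (\<lambda>w. f2 y w s)" if "0 < s" for y s
    using dens_pos that by (auto intro: less_imp_le)
  have relax1: "- (\<nu>11 + \<nu>12) * f1 y v s \<le> Df1 y v s (v, 1)" if "0 < s" "0 \<le> f1 y v s" for y s
    unfolding eq1[rule_format, OF \<open>0 < s\<close>, unfolded Let_def]
    using dens_nonneg[OF \<open>0 < s\<close>] nu_pos that by (intro relaxation_ge maxwellian_nonneg) auto
  show "0 < f1 x v t"
    using transport_positive[where F = "\<lambda>p. f1 (fst p) v (snd p)" and DF = "\<lambda>y s. Df1 y v s"
        and K = "\<nu>11 + \<nu>12" and v = v, simplified fst_conv snd_conv,
        OF cont(1)[rule_format] diff(1)[rule_format] relax1]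
      ic(1) init_pos(1) \<open>0 \<le> t\<close> by simp
  have relax2: "- (\<nu>22 + \<nu>21) * f2 y v s \<le> Df2 y v s (v, 1)" if "0 < s" "0 \<le> f2 y v s" for y s
    unfolding eq2[rule_format, OF \<open>0 < s\<close>, unfolded Let_def]
    using dens_nonneg[OF \<open>0 < s\<close>] nu_pos that by (intro relaxation_ge maxwellian_nonneg) auto
  show "0 < f2 x v t"
    using transport_positive[where F = "\<lambda>p. f2 (fst p) v (snd p)" and DF = "\<lambda>y s. Df2 y v s"
        and K = "\<nu>22 + \<nu>21" and v = v, simplified fst_conv snd_conv,
        OF cont(2)[rule_format] diff(2)[rule_format] relax2]
      ic(2) init_pos(2) \<open>0 \<le> t\<close> by simp
qed

end
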